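(* Let $v\in\mathbb R^w$ and $u\in\{-1,1\}^w$ be such that $\|v-u\|_1\le(1-\kappa)w$, where $\kappa>0$ is a positive constant. Then with probability $1-\exp(-\Omega(w))$, $$\mathrm{ham}(\mathbf{Round}(v),u)\le\frac12\left(1-\frac\kappa2\right)w.$$
   Context: $\mathbf{Round}:\mathbb R\to\{-1,1\}$ is the randomized function with: for $t\in[-1,1]$, $\mathbf{Round}(t)=1$ with probability $\frac{1+t}2$ and $-1$ with probability $\frac{1-t}2$; for $|t|>1$, $\mathbf{Round}(t)=\mathrm{sign}(t)$. For $v\in\mathbb R^w$, $\mathbf{Round}(v)=(\mathbf{Round}(v_1),\dots,\mathbf{Round}(v_w))$ with independent randomness per coordinate. $\mathrm{ham}(x,y)$ is the number of coordinates where $x,y\in\{-1,1\}^w$ differ, and $\|\cdot\|_1$ is the $\ell_1$ norm. *)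

theory Defs
  imports "HOL-Probability.Probability"
begin

definition Round1 :: "real \<Rightarrow> real pmf" where
  "Round1 t = (if \<bar>t\<bar> \<le> 1
      then map_pmf (\<lambda>b. if b then 1 else -1) (bernoulli_pmf ((1 + t) / 2))
      else return_pmf (sgn t))"

fun Round :: "real list \<Rightarrow> real list pmf" where
  "Round [] = return_pmf []"
| "Round (t # ts) = bind_pmf (Round1 t) (\<lambda>a. map_pmf (\<lambda>r. a # r) (Round ts))"

definition ham :: "real list \<Rightarrow> real list \<Rightarrow> nat" where
  "ham x y = card {i. i < length x \<and> i < length y \<and> x ! i \<noteq> y ! i}"

definition l1_dist :: "real list \<Rightarrow> real list \<Rightarrow> real" where
  "l1_dist x y = (\<Sum>i<min (length x) (length y). \<bar>x ! i - y ! i\<bar>)"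

end

theory Submission
  imports Defs
begin

text \<open>The mismatch events \<open>Round(v)\<^sub>i \<noteq> u\<^sub>i\<close> are independent and the \<open>i\<close>-th has probability
  at most \<open>\<bar>v\<^sub>i - u\<^sub>i\<bar> / 2\<close>. Hence \<open>E exp(\<mu> ham) \<le> exp((exp \<mu> - 1) \<parallel>v - u\<parallel>\<^sub>1 / 2)\<close>, and
  the Chernoff bound with \<open>\<mu> = \<kappa>/4\<close> gives failure probability at most \<open>exp(-\<kappa>\<^sup>2 w / 32)\<close>.
  For \<open>\<kappa> > 1\<close> the hypothesis is unsatisfiable once \<open>w \<ge> 1\<close>.\<close>

lemma ham_Cons: "ham (b # r) (a # us) = of_bool (b \<noteq> a) + ham r us"
proof -
  have "{i. i < length (b # r) \<and> i < length (a # us) \<and> (b # r) ! i \<noteq> (a # us) ! i}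
      = (if b = a then {} else {0}) \<union> Suc ` {i. i < length r \<and> i < length us \<and> r ! i \<noteq> us ! i}"
  proof (intro set_eqI iffI)
    fix i assume "i \<in> {i. i < length (b # r) \<and> i < length (a # us) \<and> (b # r) ! i \<noteq> (a # us) ! i}"
    then show "i \<in> (if b = a then {} else {0}) \<union> Suc ` {i. i < length r \<and> i < length us \<and> r ! i \<noteq> us ! i}"
      by (cases i) auto
  qed (auto split: if_splits)
  then show ?thesis
    unfolding ham_def by (simp add: card_image card_insert_if)
qed

lemma l1_dist_Cons: "l1_dist (t # ts) (a # us) = \<bar>t - a\<bar> + l1_dist ts us"
  unfolding l1_dist_def by (simp add: sum.lessThan_Suc_shift del: sum.lessThan_Suc)

lemma l1_dist_nonneg: "0 \<le> l1_dist x y"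
  unfolding l1_dist_def by (simp add: sum_nonneg)

lemma Round1_mismatch_prob:
  assumes "a \<in> {-1, 1}"
  shows "measure_pmf.prob (Round1 t) {b. b \<noteq> a} \<le> \<bar>t - a\<bar> / 2"
proof (cases "\<bar>t\<bar> \<le> 1")
  case True
  then have p: "0 \<le> (1 + t) / 2" "(1 + t) / 2 \<le> 1" by auto
  have "measure_pmf.prob (Round1 t) {b. b \<noteq> a}
      = measure_pmf.prob (bernoulli_pmf ((1 + t) / 2)) {if a = 1 then False else True}"
    using assms True by (auto simp: Round1_def intro!: arg_cong[where f = "measure _"])
  also have "\<dots> = \<bar>t - a\<bar> / 2"
    using assms p by (auto simp: measure_pmf_single field_simps)
  finally show ?thesis by simp
next
  case False
  then have "sgn t \<noteq> a \<Longrightarrow> 2 \<le> \<bar>t - a\<bar>"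
    using assms by (auto simp: sgn_if split: if_splits)
  then show ?thesis
    using False by (simp add: Round1_def indicator_def)
qed

lemma nn_integral_exp_of_bool:
  fixes p :: "'a pmf" and \<mu> :: real
  assumes "0 \<le> \<mu>"
  shows "(\<integral>\<^sup>+ x. ennreal (exp (\<mu> * of_bool (P x))) \<partial>p)
       = ennreal (1 + (exp \<mu> - 1) * measure_pmf.prob p {x. P x})"
proof -
  have "(\<integral>\<^sup>+ x. ennreal (exp (\<mu> * of_bool (P x))) \<partial>p)
      = (\<integral>\<^sup>+ x. 1 + ennreal (exp \<mu> - 1) * indicator {x. P x} x \<partial>p)"
  proof (intro nn_integral_cong)
    fix x
    have "ennreal (exp \<mu>) = 1 + ennreal (exp \<mu> - 1)"
      using assms by (simp add: ennreal_1[symmetric] ennreal_plus[symmetric] del: ennreal_1 ennreal_plus)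
    then show "ennreal (exp (\<mu> * of_bool (P x))) = 1 + ennreal (exp \<mu> - 1) * indicator {x. P x} x"
      by (simp add: indicator_def)
  qed
  also have "\<dots> = 1 + ennreal (exp \<mu> - 1) * emeasure p {x. P x}"
    by (simp add: nn_integral_add nn_integral_cmult measure_pmf.emeasure_space_1)
  also have "\<dots> = ennreal (1 + (exp \<mu> - 1) * measure_pmf.prob p {x. P x})"
    using assms by (simp add: measure_pmf.emeasure_eq_measure ennreal_mult ennreal_plus)
  finally show ?thesis .
qed

lemma Round1_mismatch_mgf:
  assumes "a \<in> {-1, 1}" and "0 \<le> \<mu>"
  shows "(\<integral>\<^sup>+ b. ennreal (exp (\<mu> * of_bool (b \<noteq> a))) \<partial>Round1 t)
       \<le> ennreal (exp ((exp \<mu> - 1) * \<bar>t - a\<bar> / 2))"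
proof -
  have "(\<integral>\<^sup>+ b. ennreal (exp (\<mu> * of_bool (b \<noteq> a))) \<partial>Round1 t)
      = ennreal (1 + (exp \<mu> - 1) * measure_pmf.prob (Round1 t) {b. b \<noteq> a})"
    using assms(2) by (rule nn_integral_exp_of_bool)
  also have "\<dots> \<le> ennreal (1 + (exp \<mu> - 1) * (\<bar>t - a\<bar> / 2))"
    using assms by (intro ennreal_leI add_left_mono mult_left_mono Round1_mismatch_prob) auto
  also have "\<dots> \<le> ennreal (exp ((exp \<mu> - 1) * \<bar>t - a\<bar> / 2))"
    by (intro ennreal_leI) (use exp_ge_add_one_self in auto)
  finally show ?thesis .
qed

lemma Round_ham_mgf:
  fixes \<mu> :: real
  assumes "0 \<le> \<mu>" and "length u = length v" and "set u \<subseteq> {-1, 1}"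
  shows "(\<integral>\<^sup>+ x. ennreal (exp (\<mu> * real (ham x u))) \<partial>Round v)
       \<le> ennreal (exp ((exp \<mu> - 1) * l1_dist v u / 2))"
  using assms(2,3)
proof (induction v arbitrary: u)
  case Nil
  then show ?case by (simp add: ham_def l1_dist_def)
next
  case (Cons t ts)
  then obtain a us where u: "u = a # us" and a: "a \<in> {-1, 1}"
    and us: "length us = length ts" "set us \<subseteq> {-1, 1}"
    by (cases u) auto
  let ?mgf_ts = "\<integral>\<^sup>+ r. ennreal (exp (\<mu> * real (ham r us))) \<partial>Round ts"
  have "(\<integral>\<^sup>+ x. ennreal (exp (\<mu> * real (ham x u))) \<partial>Round (t # ts))
      = (\<integral>\<^sup>+ b. ennreal (exp (\<mu> * of_bool (b \<noteq> a))) * ?mgf_ts \<partial>Round1 t)"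
    by (simp add: u ham_Cons distrib_left exp_add ennreal_mult' nn_integral_cmult)
  also have "\<dots> \<le> (\<integral>\<^sup>+ b. ennreal (exp (\<mu> * of_bool (b \<noteq> a)))
                      * ennreal (exp ((exp \<mu> - 1) * l1_dist ts us / 2)) \<partial>Round1 t)"
    using Cons.IH us by (intro nn_integral_mono mult_left_mono) auto
  also have "\<dots> \<le> ennreal (exp ((exp \<mu> - 1) * \<bar>t - a\<bar> / 2))
                  * ennreal (exp ((exp \<mu> - 1) * l1_dist ts us / 2))"
    using Round1_mismatch_mgf[OF a assms(1)] by (simp add: nn_integral_multc mult_right_mono)
  also have "\<dots> = ennreal (exp ((exp \<mu> - 1) * l1_dist (t # ts) u / 2))"
    by (simp add: u l1_dist_Cons add_divide_distrib distrib_left exp_add ennreal_mult')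
  finally show ?case .
qed

lemma Round_ham_tail:
  fixes \<mu> :: real
  assumes "0 < \<mu>" and "length u = length v" and "set u \<subseteq> {-1, 1}"
  shows "measure_pmf.prob (Round v) {x. T \<le> real (ham x u)}
       \<le> exp (- \<mu> * T + (exp \<mu> - 1) * l1_dist v u / 2)"
proof -
  have "emeasure (Round v) {x. T \<le> real (ham x u)}
      \<le> ennreal (exp (- \<mu> * T)) * (\<integral>\<^sup>+ x. ennreal (exp (\<mu> * real (ham x u))) \<partial>Round v)"
    using Chernoff_ineq_nn_integral_ge[OF assms(1), of UNIV "measure_pmf (Round v)" "\<lambda>x. real (ham x u)" T]
    by simp
  also have "\<dots> \<le> ennreal (exp (- \<mu> * T)) * ennreal (exp ((exp \<mu> - 1) * l1_dist v u / 2))"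
    using Round_ham_mgf[OF less_imp_le[OF assms(1)] assms(2,3)] by (intro mult_left_mono) auto
  also have "\<dots> = ennreal (exp (- \<mu> * T + (exp \<mu> - 1) * l1_dist v u / 2))"
    by (simp only: exp_add ennreal_mult' exp_ge_zero)
  finally show ?thesis
    by (simp add: measure_pmf.emeasure_eq_measure)
qed

lemma Round_ham_concentration:
  fixes \<kappa> :: real
  assumes "0 < \<kappa>" and "\<kappa> \<le> 1" and "length u = length v" and "set u \<subseteq> {-1, 1}"
    and l1: "l1_dist v u \<le> (1 - \<kappa>) * length v"
  shows "1 - exp (- (\<kappa>\<^sup>2 / 32) * length v)
       \<le> measure_pmf.prob (Round v) {x. real (ham x u) \<le> 1/2 * (1 - \<kappa>/2) * length v}"
proof -
  define w where "w = real (length v)"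
  define T where "T = 1/2 * (1 - \<kappa>/2) * w"
  define \<mu> where "\<mu> = \<kappa> / 4"
  have \<mu>: "0 < \<mu>" "\<mu> \<le> 1"
    using assms by (auto simp: \<mu>_def)
  have exponent: "- \<mu> * T + (exp \<mu> - 1) * l1_dist v u / 2 \<le> - (\<kappa>\<^sup>2 / 32) * w"
  proof -
    have "(exp \<mu> - 1) * l1_dist v u \<le> (\<mu> + \<mu>\<^sup>2) * ((1 - \<kappa>) * w)"
    proof (rule mult_mono)
      show "exp \<mu> - 1 \<le> \<mu> + \<mu>\<^sup>2"
        using exp_bound[of \<mu>] \<mu> by simp
    qed (use l1 l1_dist_nonneg \<mu> in \<open>auto simp: w_def\<close>)
    moreover have "- \<mu> * T + (\<mu> + \<mu>\<^sup>2) * ((1 - \<kappa>) * w) / 2 = - (\<kappa>\<^sup>2 / 32) * w - \<kappa> ^ 3 * w / 32"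
      by (simp add: \<mu>_def T_def field_simps power2_eq_square power3_eq_cube)
    moreover have "0 \<le> \<kappa> ^ 3 * w"
      using assms by (simp add: w_def)
    ultimately show ?thesis
      by linarith
  qed
  have "1 - exp (- (\<kappa>\<^sup>2 / 32) * w) \<le> 1 - measure_pmf.prob (Round v) {x. T \<le> real (ham x u)}"
    using order_trans[OF Round_ham_tail[OF \<mu>(1) assms(3,4)] exp_mono[OF exponent]] by simp
  also have "\<dots> = measure_pmf.prob (Round v) (UNIV - {x. T \<le> real (ham x u)})"
    using measure_pmf.prob_compl[of "{x. T \<le> real (ham x u)}" "Round v"] by simp
  also have "\<dots> \<le> measure_pmf.prob (Round v) {x. real (ham x u) \<le> T}"
    by (intro measure_pmf.finite_measure_mono) auto
  finally show ?thesis
    by (simp add: T_def w_def)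
qed

theorem lemma8p3:
  fixes \<kappa> :: real
  assumes "\<kappa> > 0"
  shows "\<exists>c > 0. \<exists>N::nat. \<forall>w \<ge> N. \<forall>v u :: real list.
           length v = w \<longrightarrow> length u = w \<longrightarrow> set u \<subseteq> {-1, 1} \<longrightarrow>
           l1_dist v u \<le> (1 - \<kappa>) * real w \<longrightarrow>
           measure_pmf.prob (Round v)
             {x. real (ham x u) \<le> 1/2 * (1 - \<kappa>/2) * real w} \<ge> 1 - exp (- c * real w)"
proof (cases "\<kappa> \<le> 1")
  case True
  have "1 - exp (- (\<kappa>\<^sup>2 / 32) * real w)
      \<le> measure_pmf.prob (Round v) {x. real (ham x u) \<le> 1/2 * (1 - \<kappa>/2) * real w}"
    if "length v = w" "length u = w" "set u \<subseteq> {-1, 1}" "l1_dist v u \<le> (1 - \<kappa>) * real w"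
    for w v u
    using Round_ham_concentration[OF assms True, of u v] that by simp
  moreover have "0 < \<kappa>\<^sup>2 / 32"
    using assms by simp
  ultimately show ?thesis
    by blast
next
  case False
  have "\<not> l1_dist v u \<le> (1 - \<kappa>) * real w" if "1 \<le> w" for w v u
  proof -
    have "(1 - \<kappa>) * real w < 0"
      using False that by (simp add: mult_neg_pos)
    then show ?thesis
      using l1_dist_nonneg[of v u] by linarith
  qed
  then show ?thesis
    by (intro exI[of _ 1] conjI exI[of _ 1] allI impI) simp_all
qed

end
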